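(* Let $\beta\ne0$, and consider the episodic MDP with finite state and action spaces, a tabular stochastic policy $\pi_\theta$, soft value functions $V^\beta_{\pi_\theta},Q^\beta_{\pi_\theta}$ and behavior state weights $\rho_b$ as in the context. Define $$g(\pi_\theta)=\frac1\beta\sum_{s\in\mathcal S}\rho_b(s)\sum_{a\in\mathcal A}\nabla_\theta\pi_\theta(a|s)\,e^{\beta Q^\beta_{\pi_\theta}(s,a)},$$ where $Q^\beta_{\pi_\theta}$ is held fixed (not differentiated), and let $\theta'=\theta+\alpha\,g(\pi_\theta)$. Then there exists $\epsilon>0$ such that for all $0<\alpha<\epsilon$, $$V^\beta_{\pi_\theta}(s)\le V^\beta_{\pi_{\theta'}}(s)\qquad\text{for all }s\in\mathcal S.$$
   Context: Episodic MDP: finite state space $\mathcal S$, finite action space $\mathcal A$, transition probabilities $p(s'|s,a)$, reward $r(s,a)$. There is a set $\mathcal S_{\rm term}\subset\mathcal S$ of absorbing terminal states with $r(s,a)=0$ and $p(\mathcal S_{\rm term}|s,a)=1$ for $s\in\mathcal S_{\rm term}$, and an integer $T$ such that from any state, under any sequence of actions, the state lies in $\mathcal S_{\rm term}$ after at most $T$ transitions with probability 1. Tabular stochastic policy: $\theta=(\theta_s)_{s\in\mathcal S}$, and for each $s$ the distribution $\pi_\theta(\cdot|s)$ on $\mathcal A$ depends only on the block $\theta_s$, continuously differentiably (e.g. softmax $\pi_\theta(a|s)=e^{\theta_{s,a}}/\sum_{a'}e^{\theta_{s,a'}}$). Soft value functions: $V^\beta_\pi(s)=\frac1\beta\log\mathbb{E}_\pi\big[e^{\beta\sum_{t\ge1}r_t}\mid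 s_1=s\big]$, $Q^\beta_\pi(s,a)=\frac1\beta\log\mathbb{E}_\pi\big[e^{\beta\sum_{t\ge1}r_t}\mid s_1=s,a_1=a\big]$; they satisfy $V^\beta_\pi(s)=\frac1\beta\log\sum_a\pi(a|s)e^{\beta Q^\beta_\pi(s,a)}$ and $Q^\beta_\pi(s,a)=r(s,a)+\frac1\beta\log\sum_{s'}p(s'|s,a)e^{\beta V^\beta_\pi(s')}$. $\rho_b:\mathcal S\to[0,\infty)$ is the state distribution of an arbitrary behavior policy (any nonnegative weights). *)

theory Defs
  imports "HOL-Analysis.Analysis"
begin

text \<open>Policies are given as functions pol s a = probability of action a in state s.
  exp_return beta p r pol n s is the expectation, under pol started in s_1 = s, of
  exp(beta * (r_1 + ... + r_n)) (sum of the first n rewards).\<close>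

fun exp_return :: "real \<Rightarrow> ('s::finite \<Rightarrow> 'a::finite \<Rightarrow> 's \<Rightarrow> real) \<Rightarrow> ('s \<Rightarrow> 'a \<Rightarrow> real)
    \<Rightarrow> ('s \<Rightarrow> 'a \<Rightarrow> real) \<Rightarrow> nat \<Rightarrow> 's \<Rightarrow> real" where
  "exp_return beta p r pol 0 s = 1"
| "exp_return beta p r pol (Suc n) s =
     (\<Sum>a\<in>UNIV. pol s a * exp (beta * r s a) *
        (\<Sum>s'\<in>UNIV. p s a s' * exp_return beta p r pol n s'))"

text \<open>Same, conditioned additionally on a_1 = a (first n+1 rewards).\<close>
definition exp_return_sa :: "real \<Rightarrow> ('s::finite \<Rightarrow> 'a::finite \<Rightarrow> 's \<Rightarrow> real) \<Rightarrow> ('s \<Rightarrow> 'a \<Rightarrow> real)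
    \<Rightarrow> ('s \<Rightarrow> 'a \<Rightarrow> real) \<Rightarrow> nat \<Rightarrow> 's \<Rightarrow> 'a \<Rightarrow> real" where
  "exp_return_sa beta p r pol n s a =
     exp (beta * r s a) * (\<Sum>s'\<in>UNIV. p s a s' * exp_return beta p r pol n s')"

text \<open>Soft value functions: the infinite reward sum is the limit of the partial sums
  (which is eventually constant, since terminal states are absorbing with zero reward).\<close>
definition softV :: "real \<Rightarrow> ('s::finite \<Rightarrow> 'a::finite \<Rightarrow> 's \<Rightarrow> real) \<Rightarrow> ('s \<Rightarrow> 'a \<Rightarrow> real)
    \<Rightarrow> ('s \<Rightarrow> 'a \<Rightarrow> real) \<Rightarrow> 's \<Rightarrow> real" where
  "softV beta p r pol s = ln (lim (\<lambda>n. exp_return beta p r pol n s)) / beta"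

definition softQ :: "real \<Rightarrow> ('s::finite \<Rightarrow> 'a::finite \<Rightarrow> 's \<Rightarrow> real) \<Rightarrow> ('s \<Rightarrow> 'a \<Rightarrow> real)
    \<Rightarrow> ('s \<Rightarrow> 'a \<Rightarrow> real) \<Rightarrow> 's \<Rightarrow> 'a \<Rightarrow> real" where
  "softQ beta p r pol s a = ln (lim (\<lambda>n. exp_return_sa beta p r pol n s a)) / beta"

end

theory Submission
  imports Defs
begin

text \<open>Since every episode ends within T steps, the finite-horizon returns are constant from
  horizon T on, so W = exp (beta V) is a fixed point of the soft Bellman operator of the current
  policy and exp (beta Q) is the one-step backup of W. At a state s the direction g is
  rho_b(s) / beta times the gradient G of the policy average y \<mapsto> \<Sum>a. pi s y a * exp (beta Q(s,a)),
  so to first order a step of size alpha changes beta times this average by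
  alpha rho_b(s) |G|^2 \<ge> 0. Hence for small alpha, W is a sub-solution (beta > 0) or a
  super-solution (beta < 0) of the soft Bellman equation of the new policy, and comparison by
  backward induction over the horizon gives the claim.\<close>

lemma sum_convex_combination_pos:
  fixes w f :: "'x::finite \<Rightarrow> real"
  assumes "\<forall>x. 0 \<le> w x" and "(\<Sum>x\<in>UNIV. w x) = 1" and "\<forall>x. 0 < f x"
  shows "0 < (\<Sum>x\<in>UNIV. w x * f x)"
proof -
  obtain x where "w x \<noteq> 0"
    using assms(2) by (metis sum.neutral zero_neq_one)
  with assms show ?thesis
    by (intro sum_pos2[where i=x]) (auto simp: less_le)
qed

lemma has_derivative_weighted_sum:
  fixes f :: "'v::real_inner \<Rightarrow> 'a \<Rightarrow> real"
  assumes "\<And>a. ((\<lambda>y. f y a) has_derivative (\<lambda>h. G a \<bullet> h)) (at x)"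
  shows "((\<lambda>y. \<Sum>a\<in>A. f y a * q a) has_derivative (\<lambda>h. (\<Sum>a\<in>A. q a *\<^sub>R G a) \<bullet> h)) (at x)"
proof -
  have "((\<lambda>y. \<Sum>a\<in>A. f y a * q a) has_derivative (\<lambda>h. \<Sum>a\<in>A. (G a \<bullet> h) * q a)) (at x)"
    by (intro has_derivative_sum has_derivative_mult_left assms)
  then show ?thesis by (simp add: inner_sum_left mult.commute)
qed

lemma eventually_ascent_along_gradient:
  fixes F :: "'v::real_inner \<Rightarrow> real"
  assumes F': "(F has_derivative (\<lambda>h. G \<bullet> h)) (at x)" and "0 \<le> c"
  shows "\<forall>\<^sub>F \<alpha> in at_right 0. F x \<le> F (x + (\<alpha> * c) *\<^sub>R G)"
proof (cases "c = 0 \<or> G = 0")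
  case True
  then show ?thesis by auto
next
  case False
  then have slope: "0 < c * (G \<bullet> G)" using \<open>0 \<le> c\<close> by simp
  have "((\<lambda>\<alpha>. x + (\<alpha> * c) *\<^sub>R G) has_derivative (\<lambda>h. (h * c) *\<^sub>R G)) (at 0)"
    by (auto intro!: derivative_eq_intros)
  moreover have "(F has_derivative (\<lambda>h. G \<bullet> h)) (at (x + (0 * c) *\<^sub>R G))"
    using F' by simp
  ultimately have "((\<lambda>\<alpha>. F (x + (\<alpha> * c) *\<^sub>R G)) has_derivative (\<lambda>h. G \<bullet> ((h * c) *\<^sub>R G))) (at 0)"
    by (rule has_derivative_compose)
  moreover have "(\<lambda>h. G \<bullet> ((h * c) *\<^sub>R G)) = (*) (c * (G \<bullet> G))"
    by (simp add: fun_eq_iff)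
  ultimately have "((\<lambda>\<alpha>. F (x + (\<alpha> * c) *\<^sub>R G)) has_real_derivative c * (G \<bullet> G)) (at 0)"
    by (simp add: has_field_derivative_def)
  from DERIV_pos_inc_right[OF this slope] show ?thesis
    by (auto simp: eventually_at_right_field less_imp_le)
qed

lemma eventually_ascent_along_scaled_gradient:
  fixes F :: "'v::real_inner \<Rightarrow> real"
  assumes F': "(F has_derivative (\<lambda>h. G \<bullet> h)) (at x)" and "b \<noteq> 0" and "0 \<le> c"
  shows "\<forall>\<^sub>F \<alpha> in at_right 0. b * F x \<le> b * F (x + \<alpha> *\<^sub>R ((1 / b) *\<^sub>R (c *\<^sub>R G)))"
proof -
  have "((\<lambda>y. b * F y) has_derivative (\<lambda>h. (b *\<^sub>R G) \<bullet> h)) (at x)"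
    using has_derivative_mult_right[OF F', of b] by simp
  then have "\<forall>\<^sub>F \<alpha> in at_right 0. b * F x \<le> b * F (x + (\<alpha> * (c / b\<^sup>2)) *\<^sub>R (b *\<^sub>R G))"
    using \<open>0 \<le> c\<close> by (intro eventually_ascent_along_gradient) simp_all
  moreover have "(\<alpha> * (c / b\<^sup>2)) *\<^sub>R (b *\<^sub>R G) = \<alpha> *\<^sub>R ((1 / b) *\<^sub>R (c *\<^sub>R G))" for \<alpha>
    using \<open>b \<noteq> 0\<close> by (simp add: power2_eq_square)
  ultimately show ?thesis by (simp only:)
qed

fun absorbed_within :: "('s \<Rightarrow> 'a \<Rightarrow> 's \<Rightarrow> real) \<Rightarrow> 's set \<Rightarrow> nat \<Rightarrow> 's \<Rightarrow> bool" where
  "absorbed_within p St 0 s \<longleftrightarrow> s \<in> St"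
| "absorbed_within p St (Suc k) s \<longleftrightarrow>
     s \<in> St \<or> (\<forall>a s'. 0 < p s a s' \<longrightarrow> absorbed_within p St k s')"

lemma absorbed_within_if_paths_absorbed:
  assumes "\<forall>ss as. ss 0 = s \<and> (\<forall>t<k. 0 < p (ss t) (as t) (ss (Suc t))) \<longrightarrow> (\<exists>t\<le>k. ss t \<in> St)"
  shows "absorbed_within p St k s"
  using assms
proof (induction k arbitrary: s)
  case 0
  then show ?case using 0[rule_format, of "\<lambda>_. s"] by simp
next
  case (Suc k)
  show ?case
  proof (cases "s \<in> St")
    case False
    have "absorbed_within p St k s'" if step: "0 < p s a s'" for a s'
    proof (rule Suc.IH, intro allI impI)
      fix ss as
      assume path: "ss 0 = s' \<and> (\<forall>t<k. 0 < p (ss t) (as t) (ss (Suc t)))"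
      then have "\<forall>t<Suc k. 0 < p (case_nat s ss t) (case_nat a as t) (case_nat s ss (Suc t))"
        using step by (auto simp: less_Suc_eq_0_disj)
      then have "\<exists>t\<le>Suc k. case_nat s ss t \<in> St"
        using Suc.prems[rule_format, of "case_nat s ss" "case_nat a as"] by simp
      then obtain t where "t \<le> Suc k" "case_nat s ss t \<in> St" by blast
      with False show "\<exists>t\<le>k. ss t \<in> St"
        by (cases t) auto
    qed
    then show ?thesis by simp
  qed simp
qed

locale episodic_mdp =
  fixes beta :: real
    and p :: "'s::finite \<Rightarrow> 'a::finite \<Rightarrow> 's \<Rightarrow> real"
    and r :: "'s \<Rightarrow> 'a \<Rightarrow> real"
    and St :: "'s set"
    and T :: nat
  assumes p_nonneg: "\<forall>s a s'. 0 \<le> p s a s'"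
    and p_sum: "\<forall>s a. (\<Sum>s'\<in>UNIV. p s a s') = 1"
    and term_reward: "\<forall>s\<in>St. \<forall>a. r s a = 0"
    and term_absorb: "\<forall>s\<in>St. \<forall>a. (\<Sum>s'\<in>St. p s a s') = 1"
    and horizon: "\<forall>(ss :: nat \<Rightarrow> 's) (as :: nat \<Rightarrow> 'a).
                    (\<forall>t<T. 0 < p (ss t) (as t) (ss (Suc t))) \<longrightarrow> (\<exists>t\<le>T. ss t \<in> St)"
begin

definition stochastic_policy :: "('s \<Rightarrow> 'a \<Rightarrow> real) \<Rightarrow> bool" where
  "stochastic_policy pol \<longleftrightarrow> (\<forall>s a. 0 \<le> pol s a) \<and> (\<forall>s. (\<Sum>a\<in>UNIV. pol s a) = 1)"

definition soft_backup :: "('s \<Rightarrow> real) \<Rightarrow> 's \<Rightarrow> 'a \<Rightarrow> real" where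
  "soft_backup W s a = exp (beta * r s a) * (\<Sum>s'\<in>UNIV. p s a s' * W s')"

definition soft_bellman :: "('s \<Rightarrow> 'a \<Rightarrow> real) \<Rightarrow> ('s \<Rightarrow> real) \<Rightarrow> 's \<Rightarrow> real" where
  "soft_bellman pol W s = (\<Sum>a\<in>UNIV. pol s a * soft_backup W s a)"

lemma exp_return_Suc:
  "exp_return beta p r pol (Suc n) = soft_bellman pol (exp_return beta p r pol n)"
  by (simp add: fun_eq_iff soft_bellman_def soft_backup_def mult.assoc)

lemma exp_return_sa_eq_soft_backup:
  "exp_return_sa beta p r pol n s a = soft_backup (exp_return beta p r pol n) s a"
  by (simp add: exp_return_sa_def soft_backup_def)

lemma p_exit_terminal_eq_0: "s \<in> St \<Longrightarrow> s' \<notin> St \<Longrightarrow> p s a s' = 0"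
proof -
  assume "s \<in> St" "s' \<notin> St"
  have "(\<Sum>x\<in>UNIV. p s a x) = (\<Sum>x\<in>St. p s a x) + (\<Sum>x\<in>UNIV - St. p s a x)"
    by (simp add: sum.subset_diff[of St UNIV] add.commute)
  with \<open>s \<in> St\<close> have "(\<Sum>x\<in>UNIV - St. p s a x) = 0"
    using p_sum term_absorb by simp
  with \<open>s' \<notin> St\<close> show "p s a s' = 0"
    using p_nonneg by (simp add: sum_nonneg_eq_0_iff)
qed

lemma soft_backup_pos: "\<forall>s. 0 < W s \<Longrightarrow> 0 < soft_backup W s a"
  unfolding soft_backup_def using p_nonneg p_sum by (simp add: sum_convex_combination_pos)

lemma soft_bellman_pos:
  "stochastic_policy pol \<Longrightarrow> \<forall>s. 0 < W s \<Longrightarrow> 0 < soft_bellman pol W s"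
  unfolding soft_bellman_def stochastic_policy_def
  by (simp add: sum_convex_combination_pos soft_backup_pos)

lemma soft_bellman_terminal:
  assumes "stochastic_policy pol" and "s \<in> St" and "\<forall>s'\<in>St. W s' = 1"
  shows "soft_bellman pol W s = 1"
proof -
  have "(\<Sum>s'\<in>UNIV. p s a s' * W s') = (\<Sum>s'\<in>UNIV. p s a s')" for a
    using assms p_exit_terminal_eq_0 by (intro sum.cong) auto
  then have "soft_backup W s a = 1" for a
    using assms(2) term_reward p_sum by (simp add: soft_backup_def)
  with assms(1) show ?thesis
    by (simp add: soft_bellman_def stochastic_policy_def)
qed

lemma soft_bellman_mono:
  assumes "stochastic_policy pol" and "\<forall>a s'. 0 < p s a s' \<longrightarrow> V s' \<le> U s'"
  shows "soft_bellman pol V s \<le> soft_bellman pol U s"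
proof -
  have "p s a s' * V s' \<le> p s a s' * U s'" for a s'
    using assms(2) p_nonneg by (cases "p s a s' = 0") (auto simp: less_le mult_left_mono)
  then have "soft_backup V s a \<le> soft_backup U s a" for a
    by (simp add: soft_backup_def sum_mono)
  with assms(1) show ?thesis
    unfolding soft_bellman_def stochastic_policy_def by (simp add: sum_mono mult_left_mono)
qed

lemma exp_return_terminal:
  "stochastic_policy pol \<Longrightarrow> s \<in> St \<Longrightarrow> exp_return beta p r pol n s = 1"
proof (induction n arbitrary: s)
  case (Suc n)
  then show ?case by (simp add: exp_return_Suc soft_bellman_terminal)
qed simp

lemma exp_return_pos: "stochastic_policy pol \<Longrightarrow> 0 < exp_return beta p r pol n s"
proof (induction n arbitrary: s)
  case (Suc n)
  then show ?case by (simp add: exp_return_Suc soft_bellman_pos)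
qed simp

lemma exp_return_eq_if_absorbed:
  assumes "stochastic_policy pol"
  shows "absorbed_within p St k s \<Longrightarrow> k \<le> n \<Longrightarrow>
    exp_return beta p r pol n s = exp_return beta p r pol k s"
proof (induction k arbitrary: n s)
  case 0
  then show ?case using exp_return_terminal[OF assms] by simp
next
  case (Suc k)
  show ?case
  proof (cases "s \<in> St")
    case True
    then show ?thesis by (simp only: exp_return_terminal[OF assms])
  next
    case False
    obtain m where m: "n = Suc m" "k \<le> m"
      using Suc.prems(2) by (cases n) auto
    have "\<forall>a s'. 0 < p s a s' \<longrightarrow> exp_return beta p r pol m s' = exp_return beta p r pol k s'"
      using Suc.prems(1) False by (auto intro: Suc.IH[OF _ m(2)])
    then show ?thesis
      unfolding m(1) exp_return_Suc
      by (intro order.antisym soft_bellman_mono[OF assms]) simp_all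
  qed
qed

lemma soft_bellman_comparison:
  assumes "stochastic_policy pol" and "\<forall>s\<in>St. V s \<le> U s"
    and "\<forall>s. s \<notin> St \<longrightarrow> V s \<le> soft_bellman pol V s"
    and "\<forall>s. s \<notin> St \<longrightarrow> soft_bellman pol U s \<le> U s"
  shows "absorbed_within p St k s \<Longrightarrow> V s \<le> U s"
proof (induction k arbitrary: s)
  case 0
  then show ?case using assms(2) by simp
next
  case (Suc k)
  show ?case
  proof (cases "s \<in> St")
    case False
    have "V s \<le> soft_bellman pol V s"
      using False assms(3) by simp
    also have "\<dots> \<le> soft_bellman pol U s"
      using Suc False by (intro soft_bellman_mono[OF assms(1)]) simp
    also have "\<dots> \<le> U s"
      using False assms(4) by simp
    finally show ?thesis .
  qed (use assms(2) in simp)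
qed

lemma absorbed_within_horizon: "absorbed_within p St T s"
  using horizon by (intro absorbed_within_if_paths_absorbed) simp

lemma exp_return_beyond_horizon:
  "stochastic_policy pol \<Longrightarrow> T \<le> n \<Longrightarrow> exp_return beta p r pol n s = exp_return beta p r pol T s"
  by (rule exp_return_eq_if_absorbed[OF _ absorbed_within_horizon])

lemma soft_bellman_exp_return_horizon:
  "stochastic_policy pol \<Longrightarrow>
    soft_bellman pol (exp_return beta p r pol T) s = exp_return beta p r pol T s"
  using exp_return_beyond_horizon[of pol "Suc T" s] unfolding exp_return_Suc by simp

lemma softV_eq:
  assumes "stochastic_policy pol"
  shows "softV beta p r pol s = ln (exp_return beta p r pol T s) / beta"
proof -
  have "eventually (\<lambda>n. exp_return beta p r pol n s = exp_return beta p r pol T s) sequentially"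
    using exp_return_beyond_horizon[OF assms] by (rule eventually_sequentiallyI)
  then have "lim (\<lambda>n. exp_return beta p r pol n s) = exp_return beta p r pol T s"
    by (intro limI tendsto_eventually)
  then show ?thesis by (simp add: softV_def)
qed

lemma exp_softQ_eq:
  assumes "beta \<noteq> 0" and "stochastic_policy pol"
  shows "exp (beta * softQ beta p r pol s a) = soft_backup (exp_return beta p r pol T) s a"
proof -
  have "eventually (\<lambda>n. exp_return_sa beta p r pol n s a =
      soft_backup (exp_return beta p r pol T) s a) sequentially"
  proof (rule eventually_sequentiallyI)
    fix n
    assume "T \<le> n"
    then have "exp_return beta p r pol n = exp_return beta p r pol T"
      by (intro ext exp_return_beyond_horizon[OF assms(2)])
    then show "exp_return_sa beta p r pol n s a = soft_backup (exp_return beta p r pol T) s a"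
      by (simp add: exp_return_sa_eq_soft_backup)
  qed
  then have "lim (\<lambda>n. exp_return_sa beta p r pol n s a) = soft_backup (exp_return beta p r pol T) s a"
    by (intro limI tendsto_eventually)
  moreover have "0 < soft_backup (exp_return beta p r pol T) s a"
    using exp_return_pos[OF assms(2)] by (simp add: soft_backup_pos)
  ultimately show ?thesis
    using assms(1) by (simp add: softQ_def)
qed

lemma soft_policy_improvement:
  assumes "beta \<noteq> 0" and pol: "stochastic_policy pol" and pol': "stochastic_policy pol'"
    and improves: "\<forall>s. beta * exp_return beta p r pol T s
                     \<le> beta * soft_bellman pol' (exp_return beta p r pol T) s"
  shows "softV beta p r pol s \<le> softV beta p r pol' s"
proof -
  define W where "W = exp_return beta p r pol T"
  define W' where "W' = exp_return beta p r pol' T"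
  have terminal: "\<forall>s\<in>St. W s \<le> W' s \<and> W' s \<le> W s"
    using exp_return_terminal[OF pol] exp_return_terminal[OF pol'] by (simp add: W_def W'_def)
  have fixpoint: "\<forall>s. soft_bellman pol' W' s = W' s"
    using soft_bellman_exp_return_horizon[OF pol'] by (simp add: W'_def)
  have pos: "0 < W s" "0 < W' s"
    unfolding W_def W'_def using exp_return_pos pol pol' by blast+
  have softV: "softV beta p r pol s = ln (W s) / beta" "softV beta p r pol' s = ln (W' s) / beta"
    unfolding W_def W'_def using softV_eq pol pol' by blast+
  show ?thesis
  proof (cases "0 < beta")
    case True
    with improves have "\<forall>s. W s \<le> soft_bellman pol' W s"
      by (simp add: W_def)
    with terminal fixpoint have "W s \<le> W' s"
      by (intro soft_bellman_comparison[OF pol' _ _ _ absorbed_within_horizon]) simp_all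
    with True pos show ?thesis
      unfolding softV by (simp add: divide_right_mono)
  next
    case False
    with assms(1) have "beta < 0" by simp
    with improves have "\<forall>s. soft_bellman pol' W s \<le> W s"
      by (simp add: W_def mult_le_cancel_left)
    with terminal fixpoint have "W' s \<le> W s"
      by (intro soft_bellman_comparison[OF pol' _ _ _ absorbed_within_horizon]) simp_all
    with \<open>beta < 0\<close> pos show ?thesis
      unfolding softV by (simp add: divide_right_mono_neg)
  qed
qed

end

theorem theorem3p4:
  fixes beta :: real
    and p :: "'s::finite \<Rightarrow> 'a::finite \<Rightarrow> 's \<Rightarrow> real"
    and r :: "'s \<Rightarrow> 'a \<Rightarrow> real"
    and S_term :: "'s set"
    and T :: nat
    and pi :: "'s \<Rightarrow> 'p::euclidean_space \<Rightarrow> 'a \<Rightarrow> real"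
    and grad_pi :: "'s \<Rightarrow> 'a \<Rightarrow> 'p \<Rightarrow> 'p"
    and rho_b :: "'s \<Rightarrow> real"
    and theta :: "'s \<Rightarrow> 'p"
  assumes beta_nz: "beta \<noteq> 0"
    and p_nonneg: "\<forall>s a s'. 0 \<le> p s a s'"
    and p_sum: "\<forall>s a. (\<Sum>s'\<in>UNIV. p s a s') = 1"
    and term_reward: "\<forall>s\<in>S_term. \<forall>a. r s a = 0"
    and term_absorb: "\<forall>s\<in>S_term. \<forall>a. (\<Sum>s'\<in>S_term. p s a s') = 1"
    and horizon: "\<forall>(ss :: nat \<Rightarrow> 's) (as :: nat \<Rightarrow> 'a).
                    (\<forall>t<T. 0 < p (ss t) (as t) (ss (Suc t))) \<longrightarrow> (\<exists>t\<le>T. ss t \<in> S_term)"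
    and pi_nonneg: "\<forall>s x a. 0 \<le> pi s x a"
    and pi_sum: "\<forall>s x. (\<Sum>a\<in>UNIV. pi s x a) = 1"
    and pi_deriv: "\<forall>s a x. ((\<lambda>y. pi s y a) has_derivative (\<lambda>h. grad_pi s a x \<bullet> h)) (at x)"
    and pi_C1: "\<forall>s a. continuous_on UNIV (grad_pi s a)"
    and rho_nonneg: "\<forall>s. 0 \<le> rho_b s"
  shows "let pol = (\<lambda>s a. pi s (theta s) a);
             g = (\<lambda>s. (1 / beta) *\<^sub>R (rho_b s *\<^sub>R
                    (\<Sum>a\<in>UNIV. exp (beta * softQ beta p r pol s a) *\<^sub>R grad_pi s a (theta s))))
         in \<exists>\<epsilon>>0. \<forall>\<alpha>. 0 < \<alpha> \<and> \<alpha> < \<epsilon> \<longrightarrow>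
              (\<forall>s. softV beta p r pol s
                   \<le> softV beta p r (\<lambda>s' a. pi s' (theta s' + \<alpha> *\<^sub>R g s') a) s)"
proof -
  interpret episodic_mdp beta p r S_term T
    using p_nonneg p_sum term_reward term_absorb horizon by unfold_locales
  define pol where "pol = (\<lambda>s a. pi s (theta s) a)"
  define W where "W = exp_return beta p r pol T"
  define G where "G s = (\<Sum>a\<in>UNIV. soft_backup W s a *\<^sub>R grad_pi s a (theta s))" for s
  define g where "g s = (1 / beta) *\<^sub>R (rho_b s *\<^sub>R G s)" for s
  have policy: "stochastic_policy (\<lambda>s a. pi s (th s) a)" for th
    using pi_nonneg pi_sum by (simp add: stochastic_policy_def)
  have g_eq: "(1 / beta) *\<^sub>R (rho_b s *\<^sub>R
      (\<Sum>a\<in>UNIV. exp (beta * softQ beta p r pol s a) *\<^sub>R grad_pi s a (theta s))) = g s" for s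
    using exp_softQ_eq[OF beta_nz policy] by (simp add: g_def G_def W_def pol_def)
  define step where "step \<alpha> = (\<lambda>s a. pi s (theta s + \<alpha> *\<^sub>R g s) a)" for \<alpha>
  have "\<forall>\<^sub>F \<alpha> in at_right 0. \<forall>s. beta * W s \<le> beta * soft_bellman (step \<alpha>) W s"
  proof (intro eventually_all_finite)
    fix s
    have "((\<lambda>y. \<Sum>a\<in>UNIV. pi s y a * soft_backup W s a) has_derivative (\<lambda>h. G s \<bullet> h)) (at (theta s))"
      unfolding G_def using pi_deriv by (intro has_derivative_weighted_sum) simp
    from eventually_ascent_along_scaled_gradient[OF this beta_nz rho_nonneg[rule_format]]
    show "\<forall>\<^sub>F \<alpha> in at_right 0. beta * W s \<le> beta * soft_bellman (step \<alpha>) W s"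
      using soft_bellman_exp_return_horizon[OF policy, of theta s]
      by (simp add: soft_bellman_def step_def g_def W_def pol_def)
  qed
  then obtain \<epsilon> where "0 < \<epsilon>"
    and small_steps: "\<forall>\<alpha>>0. \<alpha> < \<epsilon> \<longrightarrow> (\<forall>s. beta * W s \<le> beta * soft_bellman (step \<alpha>) W s)"
    unfolding eventually_at_right_field by blast
  have "softV beta p r pol s \<le> softV beta p r (step \<alpha>) s" if "0 < \<alpha>" "\<alpha> < \<epsilon>" for \<alpha> s
    using small_steps that unfolding W_def pol_def step_def
    by (intro soft_policy_improvement[OF beta_nz policy policy]) blast
  with \<open>0 < \<epsilon>\<close> show ?thesis
    unfolding Let_def pol_def[symmetric] g_eq step_def by blast
qed

end
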